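(* If $X$ is a quasi-lattice (i.e., a $\upsilon$-quasi-lattice or a $\mu$-quasi-lattice), then $X_+$ is a proper and generating cone.
   Context: A pre-ordered Banach space is a real Banach space $X$ with a cone $X_+$ ($X_++X_+\subseteq X_+$, $\lambda X_+\subseteq X_+$ for $\lambda\ge0$; not assumed proper); $x\le y$ means $y-x\in X_+$. The cone is proper if $X_+\cap(-X_+)=\{0\}$ and generating if $X=X_+-X_+$. For $A\subseteq X$, $\upsilon(A)$ is the set of upper bounds of $A$ and $\mu(A)$ the set of minimal upper bounds ($z\in\upsilon(A)$ such that $A\le w\le z$ implies $w=z$). Let $\sigma_{x,y}(z)=\|z-x\|+\|z-y\|$. A pre-ordered Banach space with closed cone is a $\upsilon$-quasi-lattice if for all $x,y$, $\upsilon(\{x,y\})\neq\emptyset$ and there is a unique element of $\upsilon(\{x,y\})$ minimizing $\sigma_{x,y}$ on $\upsilon(\{x,y\})$; it is a $\mu$-quasi-lattice if for all $x,y$, $\mu(\{x,y\})\ne\emptyset$ and there is a unique element of $\mu(\{x,y\})$ minimizing $\sigma_{x,y}$ on $\mu(\{x,y\})$. *)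

theory Defs
  imports "HOL-Analysis.Analysis"
begin

text \<open>A pre-ordered Banach space is a real Banach space (type class banach) together with
a cone C (the positive cone X_+), not assumed proper.\<close>

definition is_cone :: "'a::real_vector set \<Rightarrow> bool" where
  "is_cone C \<longleftrightarrow> (\<forall>x\<in>C. \<forall>y\<in>C. x + y \<in> C) \<and> (\<forall>l::real. l \<ge> 0 \<longrightarrow> (\<forall>x\<in>C. l *\<^sub>R x \<in> C))"

definition cone_le :: "'a::real_vector set \<Rightarrow> 'a \<Rightarrow> 'a \<Rightarrow> bool" where
  "cone_le C x y \<longleftrightarrow> y - x \<in> C"

definition ubounds :: "'a::real_vector set \<Rightarrow> 'a set \<Rightarrow> 'a set" where
  "ubounds C A = {z. \<forall>a\<in>A. cone_le C a z}"

definition min_ubounds :: "'a::real_vector set \<Rightarrow> 'a set \<Rightarrow> 'a set" where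
  "min_ubounds C A = {z \<in> ubounds C A. \<forall>w. (\<forall>a\<in>A. cone_le C a w) \<and> cone_le C w z \<longrightarrow> w = z}"

definition sigma_fn :: "'a::real_normed_vector \<Rightarrow> 'a \<Rightarrow> 'a \<Rightarrow> real" where
  "sigma_fn x y z = norm (z - x) + norm (z - y)"

definition unique_sigma_min :: "'a::real_normed_vector \<Rightarrow> 'a \<Rightarrow> 'a set \<Rightarrow> bool" where
  "unique_sigma_min x y S \<longleftrightarrow> (\<exists>!z. z \<in> S \<and> (\<forall>w\<in>S. sigma_fn x y z \<le> sigma_fn x y w))"

definition upsilon_quasi_lattice :: "'a::banach set \<Rightarrow> bool" where
  "upsilon_quasi_lattice C \<longleftrightarrow> is_cone C \<and> closed C \<and>
     (\<forall>x y. ubounds C {x, y} \<noteq> {} \<and> unique_sigma_min x y (ubounds C {x, y}))"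

definition mu_quasi_lattice :: "'a::banach set \<Rightarrow> bool" where
  "mu_quasi_lattice C \<longleftrightarrow> is_cone C \<and> closed C \<and>
     (\<forall>x y. min_ubounds C {x, y} \<noteq> {} \<and> unique_sigma_min x y (min_ubounds C {x, y}))"

definition proper_cone :: "'a::real_vector set \<Rightarrow> bool" where
  "proper_cone C \<longleftrightarrow> C \<inter> uminus ` C = {0}"

definition generating_cone :: "'a::real_vector set \<Rightarrow> bool" where
  "generating_cone C \<longleftrightarrow> UNIV = {a - b | a b. a \<in> C \<and> b \<in> C}"

end

theory Submission
  imports Defs
begin

text \<open>Both quasi-lattice axioms provide upper bounds of every pair; an upper bound z of
{x, 0} writes x = z - (z - x) as a difference of positive elements, so the cone is
generating. For properness let v and -v both be positive. Then x and x + v are upper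
bounds of {x, x + v}, and both attain the least possible value \<open>\<parallel>v\<parallel>\<close> of
\<open>\<sigma>\<^sub>x\<^sub>,\<^sub>x\<^sub>+\<^sub>v\<close>, so uniqueness of the minimiser forces v = 0. For minimal upper
bounds even less is needed: if s is one, then so is the upper bound s + v \<le> s, hence
s + v = s.\<close>

lemma cone_zero_mem:
  assumes "is_cone C" "x \<in> C"
  shows "0 \<in> C"
  using assms unfolding is_cone_def by (metis order_refl scaleR_zero_left)

lemma proper_coneI:
  assumes "0 \<in> C" "\<And>v. v \<in> C \<Longrightarrow> - v \<in> C \<Longrightarrow> v = 0"
  shows "proper_cone C"
  unfolding proper_cone_def using assms by force

lemma generating_coneI_ubounds:
  assumes "\<And>x. ubounds C {x, 0} \<noteq> {}"
  shows "generating_cone C"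
  unfolding generating_cone_def
proof (intro set_eqI iffI)
  fix x
  obtain z where "z \<in> ubounds C {x, 0}" using assms by blast
  then have "z \<in> C" "z - x \<in> C" by (auto simp: ubounds_def cone_le_def)
  then show "x \<in> {a - b |a b. a \<in> C \<and> b \<in> C}" by force
qed simp

lemma min_ubounds_subset_ubounds: "min_ubounds C A \<subseteq> ubounds C A"
  unfolding min_ubounds_def by blast

lemma sigma_fn_ge_norm_diff: "norm (x - y) \<le> sigma_fn x y z"
  unfolding sigma_fn_def using norm_triangle_ineq4[of "z - y" "z - x"]
  by (simp add: algebra_simps)

lemma unique_sigma_min_imp_eq:
  assumes "unique_sigma_min x y S" "x \<in> S" "y \<in> S"
  shows "x = y"
proof -
  have "\<forall>w\<in>S. sigma_fn x y x \<le> sigma_fn x y w" "\<forall>w\<in>S. sigma_fn x y y \<le> sigma_fn x y w"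
    using sigma_fn_ge_norm_diff[of x y] by (simp_all add: sigma_fn_def norm_minus_commute)
  then show ?thesis using assms unfolding unique_sigma_min_def by blast
qed

lemma ubounds_pair_mem:
  assumes "0 \<in> C" "v \<in> C" "- v \<in> C"
  shows "x \<in> ubounds C {x, x + v}" "x + v \<in> ubounds C {x, x + v}"
  using assms by (auto simp: ubounds_def cone_le_def)

lemma proper_cone_if_min_ubounds_ne:
  assumes "is_cone C" "0 \<in> C" "min_ubounds C A \<noteq> {}"
  shows "proper_cone C"
proof (rule proper_coneI)
  show "0 \<in> C" by fact
  fix v assume v: "v \<in> C" "- v \<in> C"
  obtain s where s: "s \<in> min_ubounds C A" using assms(3) by blast
  have "\<forall>a\<in>A. cone_le C a (s + v)"
  proof
    fix a assume "a \<in> A"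
    then have "s - a \<in> C" using s by (auto simp: min_ubounds_def ubounds_def cone_le_def)
    then have "(s - a) + v \<in> C" using assms(1) v(1) by (simp add: is_cone_def)
    then show "cone_le C a (s + v)" by (simp add: cone_le_def algebra_simps)
  qed
  moreover have "cone_le C (s + v) s" using v(2) by (simp add: cone_le_def)
  ultimately have "s + v = s" using s unfolding min_ubounds_def by blast
  then show "v = 0" by simp
qed

lemma upsilon_quasi_lattice_proper:
  assumes "upsilon_quasi_lattice C"
  shows "proper_cone C"
proof -
  have cone: "is_cone C"
    and ub: "\<And>x y. ubounds C {x, y} \<noteq> {} \<and> unique_sigma_min x y (ubounds C {x, y})"
    using assms by (simp_all add: upsilon_quasi_lattice_def)
  obtain z where "z \<in> ubounds C {0, 0}" using ub[of 0 0] by blast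
  then have zero: "0 \<in> C" using cone_zero_mem[OF cone] by (auto simp: ubounds_def cone_le_def)
  show ?thesis
  proof (rule proper_coneI[OF zero])
    fix v assume "v \<in> C" "- v \<in> C"
    then show "v = 0"
      using unique_sigma_min_imp_eq[OF conjunct2[OF ub[of 0 "0 + v"]]] ubounds_pair_mem[OF zero, of v 0]
      by simp
  qed
qed

lemma mu_quasi_lattice_proper:
  assumes "mu_quasi_lattice C"
  shows "proper_cone C"
proof -
  have cone: "is_cone C"
    and ne: "\<And>x y. min_ubounds C {x, y} \<noteq> {}"
    using assms by (simp_all add: mu_quasi_lattice_def)
  obtain z where "z \<in> ubounds C {0, 0}" using ne[of 0 0] min_ubounds_subset_ubounds by blast
  then have "0 \<in> C" using cone_zero_mem[OF cone] by (auto simp: ubounds_def cone_le_def)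
  then show ?thesis using proper_cone_if_min_ubounds_ne[OF cone _ ne] by blast
qed

theorem proposition5p7:
  fixes C :: "'a::banach set"
  assumes "upsilon_quasi_lattice C \<or> mu_quasi_lattice C"
  shows "proper_cone C \<and> generating_cone C"
proof
  show "proper_cone C"
    using assms upsilon_quasi_lattice_proper mu_quasi_lattice_proper by blast
  have "ubounds C {x, y} \<noteq> {}" for x y
    using assms min_ubounds_subset_ubounds
    unfolding upsilon_quasi_lattice_def mu_quasi_lattice_def by blast
  then show "generating_cone C" by (rule generating_coneI_ubounds)
qed

end
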